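(* Let $\langle A,\to\rangle$ be a conditional algebra, and for $U,V\subseteq\mathrm{Ul}(A)$ define $$U\to^{\sigma}V=\bigcup_{(O,Y)}\ \bigcap_{\substack{a,b\in A\\ \varphi(a)\subseteq O,\ Y\subseteq\varphi(b)}}\varphi(a\to b),$$ where $(O,Y)$ ranges over pairs with $O$ an open subset of the Stone space of $A$ with $U\subseteq O$ and $Y$ a closed subset with $Y\subseteq V$. Then $\langle\mathcal{P}(\mathrm{Ul}(A)),\to^{\sigma}\rangle$ is a conditional algebra.
   Context: A conditional algebra is a pair $\langle A,\to\rangle$ where $A$ is a Boolean algebra and $\to$ is a binary operation on $A$ such that for all $a,b,c$: $a\to 1=1$; $(a\to b)\wedge(a\to c)=a\to(b\wedge c)$; $(a\vee b)\to c\le (a\to c)\wedge(b\to c)$. $\mathrm{Ul}(A)$ is the set of ultrafilters of $A$ with the Stone topology (basic clopens $\varphi(a)=\{u:a\in u\}$). The operation $\to^\sigma$ is the $\sigma$-extension of $\to$ (viewed as antitone in the first and isotone in the second argument). *)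

theory Defs
  imports Main
begin

definition conditional_algebra :: "('a::boolean_algebra \<Rightarrow> 'a \<Rightarrow> 'a) \<Rightarrow> bool" where
  "conditional_algebra imp \<longleftrightarrow>
     (\<forall>a. imp a top = top) \<and>
     (\<forall>a b c. inf (imp a b) (imp a c) = imp a (inf b c)) \<and>
     (\<forall>a b c. imp (sup a b) c \<le> inf (imp a c) (imp b c))"

definition conditional_algebra_pow :: "'b set \<Rightarrow> ('b set \<Rightarrow> 'b set \<Rightarrow> 'b set) \<Rightarrow> bool" where
  "conditional_algebra_pow X imp \<longleftrightarrow>
     (\<forall>U V. U \<subseteq> X \<longrightarrow> V \<subseteq> X \<longrightarrow> imp U V \<subseteq> X) \<and>
     (\<forall>U. U \<subseteq> X \<longrightarrow> imp U X = X) \<and>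
     (\<forall>U V W. U \<subseteq> X \<longrightarrow> V \<subseteq> X \<longrightarrow> W \<subseteq> X \<longrightarrow> imp U V \<inter> imp U W = imp U (V \<inter> W)) \<and>
     (\<forall>U V W. U \<subseteq> X \<longrightarrow> V \<subseteq> X \<longrightarrow> W \<subseteq> X \<longrightarrow> imp (U \<union> V) W \<subseteq> imp U W \<inter> imp V W)"

definition ultrafilter :: "'a::boolean_algebra set \<Rightarrow> bool" where
  "ultrafilter u \<longleftrightarrow>
     top \<in> u \<and> bot \<notin> u \<and>
     (\<forall>a b. a \<in> u \<longrightarrow> a \<le> b \<longrightarrow> b \<in> u) \<and>
     (\<forall>a b. a \<in> u \<longrightarrow> b \<in> u \<longrightarrow> inf a b \<in> u) \<and>
     (\<forall>a. a \<in> u \<or> - a \<in> u)"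

definition Ul :: "'a::boolean_algebra set set" where
  "Ul = {u. ultrafilter u}"

definition phi :: "'a::boolean_algebra \<Rightarrow> 'a set set" where
  "phi a = {u \<in> Ul. a \<in> u}"

definition stone_open :: "'a::boolean_algebra set set \<Rightarrow> bool" where
  "stone_open W \<longleftrightarrow> W \<subseteq> Ul \<and> (\<forall>u\<in>W. \<exists>a. u \<in> phi a \<and> phi a \<subseteq> W)"

definition stone_closed :: "'a::boolean_algebra set set \<Rightarrow> bool" where
  "stone_closed Y \<longleftrightarrow> Y \<subseteq> Ul \<and> stone_open (Ul - Y)"

definition sigma_imp :: "('a::boolean_algebra \<Rightarrow> 'a \<Rightarrow> 'a) \<Rightarrow> 'a set set \<Rightarrow> 'a set set \<Rightarrow> 'a set set" where
  "sigma_imp imp U V =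
     (\<Union>(W, Y) \<in> {(W, Y). stone_open W \<and> U \<subseteq> W \<and> stone_closed Y \<and> Y \<subseteq> V}.
        \<Inter>{phi (imp a b) | a b. phi a \<subseteq> W \<and> Y \<subseteq> phi b})"

end

(*
  The Stone map phi embeds A into the powerset of Ul(A) as a Boolean algebra, and
  sigma_imp is antitone in its first and monotone in its second argument by its very
  definition; so the join law for the first argument is free, and since phi is injective, U ->sigma Ul = Ul reduces to a -> top = top.
  The real work is meet preservation: witnesses (W, Y) for V and (W', Y') for V' give
  the witness (W \<inter> W', Y \<inter> Y') for V \<inter> V'.  If Y \<inter> Y' \<subseteq> phi b, compactness of
  the Stone space (from the ultrafilter lemma) yields c with Y \<subseteq> phi (b \<squnion> c) and
  Y' \<subseteq> phi (b \<squnion> -c), and a -> b = (a -> (b \<squnion> c)) \<sqinter> (a -> (b \<squnion> -c)).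
*)
theory Submission
  imports Defs
begin

definition proper_filter :: "'a::boolean_algebra set \<Rightarrow> bool" where
  "proper_filter F \<longleftrightarrow> top \<in> F \<and> bot \<notin> F \<and> (\<forall>a b. a \<in> F \<longrightarrow> a \<le> b \<longrightarrow> b \<in> F)
     \<and> (\<forall>a b. a \<in> F \<longrightarrow> b \<in> F \<longrightarrow> inf a b \<in> F)"

lemma proper_filter_upclosure:
  assumes "B \<noteq> {}" "bot \<notin> B" and inf_closed: "\<And>a b. a \<in> B \<Longrightarrow> b \<in> B \<Longrightarrow> inf a b \<in> B"
  shows "proper_filter {x. \<exists>b\<in>B. b \<le> x}"
  unfolding proper_filter_def
proof (intro conjI allI impI)
  show "top \<in> {x. \<exists>b\<in>B. b \<le> x}" using \<open>B \<noteq> {}\<close> by auto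
  show "bot \<notin> {x. \<exists>b\<in>B. b \<le> x}" using \<open>bot \<notin> B\<close> by (auto simp: bot_unique)
  show "y \<in> {x. \<exists>b\<in>B. b \<le> x}" if "x \<in> {x. \<exists>b\<in>B. b \<le> x}" "x \<le> y" for x y
    using that by (auto intro: order_trans)
  show "inf x y \<in> {x. \<exists>b\<in>B. b \<le> x}" if "x \<in> {x. \<exists>b\<in>B. b \<le> x}" "y \<in> {x. \<exists>b\<in>B. b \<le> x}" for x y
    using that inf_closed by (blast intro: inf_mono)
qed

lemma proper_filter_Union_chain:
  assumes "C \<noteq> {}" "subset.chain {F. proper_filter F} C"
  shows "proper_filter (\<Union>C)"
proof -
  have filters: "\<And>F. F \<in> C \<Longrightarrow> proper_filter F"
    and comparable: "\<And>F G. F \<in> C \<Longrightarrow> G \<in> C \<Longrightarrow> F \<subseteq> G \<or> G \<subseteq> F"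
    using assms(2) unfolding subset_chain_def by blast+
  show ?thesis
    unfolding proper_filter_def
  proof (intro conjI allI impI)
    show "top \<in> \<Union>C" "bot \<notin> \<Union>C"
      using filters \<open>C \<noteq> {}\<close> unfolding proper_filter_def by blast+
    show "b \<in> \<Union>C" if "a \<in> \<Union>C" "a \<le> b" for a b
      using that filters unfolding proper_filter_def by blast
    show "inf a b \<in> \<Union>C" if "a \<in> \<Union>C" "b \<in> \<Union>C" for a b
    proof -
      obtain F G where "F \<in> C" "G \<in> C" "a \<in> F" "b \<in> G"
        using \<open>a \<in> \<Union>C\<close> \<open>b \<in> \<Union>C\<close> by blast
      then have "a \<in> F \<union> G" "b \<in> F \<union> G" "F \<union> G \<in> C"
        using comparable[of F G] by (auto simp: sup_absorb1 sup_absorb2)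
      then show ?thesis using filters[of "F \<union> G"] unfolding proper_filter_def by blast
    qed
  qed
qed

lemma maximal_proper_filter_imp_ultrafilter:
  assumes "proper_filter M" and maximal: "\<And>F. proper_filter F \<Longrightarrow> M \<subseteq> F \<Longrightarrow> F = M"
  shows "ultrafilter M"
proof -
  have "a \<in> M" if "- a \<notin> M" for a
  proof -
    let ?B = "{inf m a | m. m \<in> M}"
    have "?B \<noteq> {}" using \<open>proper_filter M\<close> unfolding proper_filter_def by blast
    moreover have "bot \<notin> ?B"
    proof
      assume "bot \<in> ?B"
      then obtain m where "m \<in> M" "inf m a = bot" by auto
      then have "m \<le> - a" by (simp add: inf_shunt)
      then show False using \<open>m \<in> M\<close> \<open>proper_filter M\<close> \<open>- a \<notin> M\<close> unfolding proper_filter_def by blast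
    qed
    moreover have "inf x y \<in> ?B" if "x \<in> ?B" "y \<in> ?B" for x y
    proof -
      from that obtain m m' where "m \<in> M" "m' \<in> M" "x = inf m a" "y = inf m' a" by blast
      then have "inf m m' \<in> M" "inf x y = inf (inf m m') a"
        using \<open>proper_filter M\<close> unfolding proper_filter_def by (auto simp: inf_aci)
      then show ?thesis by blast
    qed
    ultimately have "proper_filter {x. \<exists>b\<in>?B. b \<le> x}" by (rule proper_filter_upclosure)
    moreover have "M \<subseteq> {x. \<exists>b\<in>?B. b \<le> x}" by auto
    ultimately have "{x. \<exists>b\<in>?B. b \<le> x} = M" by (rule maximal)
    moreover have "a \<in> {x. \<exists>b\<in>?B. b \<le> x}" using \<open>?B \<noteq> {}\<close> by auto
    ultimately show "a \<in> M" by simp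
  qed
  then show ?thesis using \<open>proper_filter M\<close> unfolding ultrafilter_def proper_filter_def by blast
qed

lemma proper_filter_imp_ultrafilter:
  assumes "proper_filter F"
  obtains u where "ultrafilter u" "F \<subseteq> u"
proof -
  let ?P = "{G. proper_filter G \<and> F \<subseteq> G}"
  have "\<exists>M\<in>?P. \<forall>G\<in>?P. M \<subseteq> G \<longrightarrow> G = M"
  proof (rule subset_Zorn_nonempty)
    show "?P \<noteq> {}" using assms by blast
    show "\<Union>C \<in> ?P" if "C \<noteq> {}" "subset.chain ?P C" for C
    proof -
      have "subset.chain {G. proper_filter G} C"
        using \<open>subset.chain ?P C\<close> unfolding subset_chain_def by blast
      then have "proper_filter (\<Union>C)" by (rule proper_filter_Union_chain[OF \<open>C \<noteq> {}\<close>])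
      moreover have "F \<subseteq> \<Union>C" using that unfolding subset_chain_def by blast
      ultimately show ?thesis by blast
    qed
  qed
  then obtain M where "proper_filter M" "F \<subseteq> M" and maximal: "\<forall>G\<in>?P. M \<subseteq> G \<longrightarrow> G = M"
    by blast
  have "ultrafilter M"
  proof (rule maximal_proper_filter_imp_ultrafilter)
    show "G = M" if "proper_filter G" "M \<subseteq> G" for G
      using that maximal \<open>F \<subseteq> M\<close> by blast
  qed fact
  then show ?thesis using that \<open>F \<subseteq> M\<close> by blast
qed

lemma ultrafilter_containing_base:
  assumes "B \<noteq> {}" "bot \<notin> B" "\<And>a b. a \<in> B \<Longrightarrow> b \<in> B \<Longrightarrow> inf a b \<in> B"
  obtains u where "ultrafilter u" "B \<subseteq> u"
proof -
  obtain u where "ultrafilter u" "{x. \<exists>b\<in>B. b \<le> x} \<subseteq> u"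
    using proper_filter_upclosure[OF assms] by (rule proper_filter_imp_ultrafilter)
  then show ?thesis using that by blast
qed

lemma ultrafilterD:
  assumes "ultrafilter u"
  shows ultrafilter_bot: "bot \<notin> u"
    and ultrafilter_upward: "\<And>a b. a \<in> u \<Longrightarrow> a \<le> b \<Longrightarrow> b \<in> u"
    and ultrafilter_inf: "\<And>a b. a \<in> u \<Longrightarrow> b \<in> u \<Longrightarrow> inf a b \<in> u"
    and ultrafilter_cases: "\<And>a. a \<in> u \<or> - a \<in> u"
  using assms unfolding ultrafilter_def by blast+

lemma ultrafilter_compl_iff:
  assumes "ultrafilter u" shows "- a \<in> u \<longleftrightarrow> a \<notin> u"
proof
  assume "- a \<in> u"
  show "a \<notin> u"
  proof
    assume "a \<in> u"
    then have "inf a (- a) \<in> u" using \<open>- a \<in> u\<close> by (rule ultrafilter_inf[OF assms])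
    then show False using ultrafilter_bot[OF assms] by simp
  qed
qed (use ultrafilter_cases[OF assms] in blast)

lemma ultrafilter_inf_iff:
  assumes "ultrafilter u" shows "inf a b \<in> u \<longleftrightarrow> a \<in> u \<and> b \<in> u"
proof
  assume "inf a b \<in> u"
  then show "a \<in> u \<and> b \<in> u"
    using ultrafilter_upward[OF assms] inf.cobounded1 inf.cobounded2 by metis
qed (use ultrafilter_inf[OF assms] in blast)

lemma ultrafilter_sup_iff:
  assumes "ultrafilter u" shows "sup a b \<in> u \<longleftrightarrow> a \<in> u \<or> b \<in> u"
proof -
  have "sup a b \<in> u \<longleftrightarrow> inf (- a) (- b) \<notin> u"
    using ultrafilter_compl_iff[OF assms, of "sup a b"] by simp
  then show ?thesis by (simp add: ultrafilter_inf_iff[OF assms] ultrafilter_compl_iff[OF assms])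
qed

lemma phi_subset_Ul: "phi a \<subseteq> Ul"
  unfolding phi_def by blast

lemma phi_top: "phi top = Ul"
  unfolding phi_def Ul_def ultrafilter_def by blast

lemma phi_bot: "phi bot = {}"
  unfolding phi_def Ul_def ultrafilter_def by blast

lemma phi_inf: "phi (inf a b) = phi a \<inter> phi b"
  unfolding phi_def Ul_def by (auto simp: ultrafilter_inf_iff)

lemma phi_sup: "phi (sup a b) = phi a \<union> phi b"
  unfolding phi_def Ul_def by (auto simp: ultrafilter_sup_iff)

lemma phi_compl: "phi (- a) = Ul - phi a"
  unfolding phi_def Ul_def by (auto simp: ultrafilter_compl_iff)

lemma phi_subset_iff: "phi a \<subseteq> phi b \<longleftrightarrow> a \<le> b"
proof
  assume "phi a \<subseteq> phi b"
  show "a \<le> b"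
  proof (rule ccontr)
    assume "\<not> a \<le> b"
    then have "inf a (- b) \<noteq> bot" by (simp add: inf_shunt)
    then obtain u where "ultrafilter u" "{inf a (- b)} \<subseteq> u"
      using ultrafilter_containing_base[of "{inf a (- b)}"] by auto
    then have "u \<in> phi a" "u \<in> phi (- b)"
      unfolding phi_def Ul_def by (auto simp: ultrafilter_inf_iff)
    then show False using \<open>phi a \<subseteq> phi b\<close> by (auto simp: phi_compl)
  qed
next
  assume "a \<le> b"
  then show "phi a \<subseteq> phi b"
    unfolding phi_def Ul_def ultrafilter_def by blast
qed

lemma stone_compactness:
  assumes "S \<noteq> {}" and sup_closed: "\<And>s t. s \<in> S \<Longrightarrow> t \<in> S \<Longrightarrow> sup s t \<in> S"
    and cover: "Ul \<subseteq> (\<Union>s\<in>S. phi s)"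
  shows "top \<in> S"
proof (rule ccontr)
  assume "top \<notin> S"
  have "uminus ` S \<noteq> {}" using \<open>S \<noteq> {}\<close> by blast
  moreover have "bot \<notin> uminus ` S" using \<open>top \<notin> S\<close> by (metis compl_bot_eq double_compl imageE)
  moreover have "inf x y \<in> uminus ` S" if "x \<in> uminus ` S" "y \<in> uminus ` S" for x y
    using that sup_closed by (auto simp flip: compl_sup)
  ultimately obtain u where "ultrafilter u" "uminus ` S \<subseteq> u"
    by (rule ultrafilter_containing_base)
  moreover obtain s where "s \<in> S" "u \<in> phi s"
    using cover \<open>ultrafilter u\<close> unfolding Ul_def by blast
  ultimately show False
    unfolding phi_def by (auto simp: ultrafilter_compl_iff)
qed

lemma stone_open_phi: "stone_open (phi a)"
  unfolding stone_open_def using phi_subset_Ul by blast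

lemma stone_open_Ul: "stone_open Ul"
  unfolding stone_open_def using phi_top by blast

lemma stone_closed_Ul: "stone_closed Ul"
  unfolding stone_closed_def stone_open_def by simp

lemma stone_open_Int:
  assumes "stone_open W" "stone_open W'" shows "stone_open (W \<inter> W')"
  unfolding stone_open_def
proof (intro conjI ballI)
  show "W \<inter> W' \<subseteq> Ul" using assms unfolding stone_open_def by blast
  fix u assume "u \<in> W \<inter> W'"
  then obtain a a' where "u \<in> phi a" "phi a \<subseteq> W" "u \<in> phi a'" "phi a' \<subseteq> W'"
    using assms unfolding stone_open_def by blast
  then show "\<exists>c. u \<in> phi c \<and> phi c \<subseteq> W \<inter> W'" using phi_inf[of a a'] by blast
qed

lemma stone_open_Un:
  assumes "stone_open W" "stone_open W'" shows "stone_open (W \<union> W')"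
  unfolding stone_open_def
proof (intro conjI ballI)
  show "W \<union> W' \<subseteq> Ul" using assms unfolding stone_open_def by blast
  fix u assume "u \<in> W \<union> W'"
  then show "\<exists>c. u \<in> phi c \<and> phi c \<subseteq> W \<union> W'"
    using assms unfolding stone_open_def by (meson UnE le_supI1 le_supI2)
qed

lemma stone_closed_Int:
  assumes "stone_closed Y" "stone_closed Y'" shows "stone_closed (Y \<inter> Y')"
proof -
  have "Ul - (Y \<inter> Y') = (Ul - Y) \<union> (Ul - Y')" by blast
  then show ?thesis using assms stone_open_Un unfolding stone_closed_def by auto
qed

lemma phi_between_closed_open:
  assumes "stone_closed Y" "stone_open W" "Y \<subseteq> W"
  obtains c where "Y \<subseteq> phi c" "phi c \<subseteq> W"
proof -
  \<comment> \<open>the s such that the part of Y inside phi s is covered by one clopen inside W\<close>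
  let ?S = "{s. \<exists>c. phi c \<subseteq> W \<and> phi s \<inter> Y \<subseteq> phi c}"
  have "top \<in> ?S"
  proof (rule stone_compactness)
    show "?S \<noteq> {}" using phi_bot by blast
    show "sup s t \<in> ?S" if "s \<in> ?S" "t \<in> ?S" for s t
    proof -
      from that obtain c d where "phi c \<subseteq> W" "phi s \<inter> Y \<subseteq> phi c" "phi d \<subseteq> W" "phi t \<inter> Y \<subseteq> phi d"
        by blast
      then have "phi (sup c d) \<subseteq> W" "phi (sup s t) \<inter> Y \<subseteq> phi (sup c d)"
        by (auto simp: phi_sup)
      then show ?thesis by blast
    qed
    show "Ul \<subseteq> (\<Union>s\<in>?S. phi s)"
    proof
      fix u :: "'a set" assume "u \<in> Ul"
      show "u \<in> (\<Union>s\<in>?S. phi s)"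
      proof (cases "u \<in> Y")
        case True
        then obtain c where "u \<in> phi c" "phi c \<subseteq> W"
          using assms unfolding stone_open_def by blast
        then show ?thesis by blast
      next
        case False
        then obtain d where "u \<in> phi d" "phi d \<subseteq> Ul - Y"
          using \<open>u \<in> Ul\<close> assms(1) unfolding stone_closed_def stone_open_def by blast
        then have "d \<in> ?S" using phi_bot by blast
        then show ?thesis using \<open>u \<in> phi d\<close> by blast
      qed
    qed
  qed
  then obtain c where "phi c \<subseteq> W" "Ul \<inter> Y \<subseteq> phi c" by (auto simp: phi_top)
  moreover have "Y \<subseteq> Ul" using assms(1) unfolding stone_closed_def by blast
  ultimately show ?thesis using that by blast
qed

lemma closed_Int_subset_phi_split:
  assumes "stone_closed Y" "stone_closed Y'" "Y \<inter> Y' \<subseteq> phi b"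
  obtains c where "Y \<subseteq> phi (sup b c)" "Y' \<subseteq> phi (sup b (- c))"
proof -
  have open_nbhd: "stone_open (phi b \<union> (Ul - Y'))"
    using stone_open_Un[OF stone_open_phi] assms(2) unfolding stone_closed_def by blast
  have "Y \<subseteq> phi b \<union> (Ul - Y')"
    using assms(1,3) unfolding stone_closed_def by blast
  then obtain c where "Y \<subseteq> phi c" "phi c \<subseteq> phi b \<union> (Ul - Y')"
    using phi_between_closed_open[OF assms(1) open_nbhd] by blast
  moreover have "Y' \<subseteq> Ul" using assms(2) unfolding stone_closed_def by blast
  ultimately have "Y \<subseteq> phi (sup b c)" "Y' \<subseteq> phi (sup b (- c))"
    unfolding phi_sup phi_compl by blast+
  then show ?thesis by (rule that)
qed

lemma mem_sigma_imp:
  "u \<in> sigma_imp imp U V \<longleftrightarrow>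
    (\<exists>W Y. stone_open W \<and> U \<subseteq> W \<and> stone_closed Y \<and> Y \<subseteq> V \<and>
      (\<forall>a b. phi a \<subseteq> W \<longrightarrow> Y \<subseteq> phi b \<longrightarrow> u \<in> phi (imp a b)))"
proof -
  have "u \<in> \<Inter>{phi (imp a b) | a b. phi a \<subseteq> W \<and> Y \<subseteq> phi b} \<longleftrightarrow>
      (\<forall>a b. phi a \<subseteq> W \<longrightarrow> Y \<subseteq> phi b \<longrightarrow> u \<in> phi (imp a b))" for W Y
    by blast
  then show ?thesis unfolding sigma_imp_def by simp
qed

lemma sigma_imp_subset_Ul: "sigma_imp imp U V \<subseteq> Ul"
proof
  fix u assume "u \<in> sigma_imp imp U V"
  then obtain W Y where "stone_closed Y"
    and "\<forall>a b. phi a \<subseteq> W \<longrightarrow> Y \<subseteq> phi b \<longrightarrow> u \<in> phi (imp a b)"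
    unfolding mem_sigma_imp by blast
  moreover have "Y \<subseteq> phi top" using \<open>stone_closed Y\<close> unfolding stone_closed_def phi_top by blast
  ultimately have "u \<in> phi (imp bot top)" by (simp add: phi_bot)
  then show "u \<in> Ul" using phi_subset_Ul by blast
qed

lemma sigma_imp_mono:
  assumes "U \<subseteq> U'" "V \<subseteq> V'"
  shows "sigma_imp imp U' V \<subseteq> sigma_imp imp U V'"
  using assms unfolding mem_sigma_imp subset_iff by meson

lemma sigma_imp_Ul:
  assumes "\<And>a. imp a top = top" "U \<subseteq> Ul"
  shows "sigma_imp imp U Ul = Ul"
proof
  show "Ul \<subseteq> sigma_imp imp U Ul"
  proof
    fix u :: "'a set" assume "u \<in> Ul"
    have "u \<in> phi (imp a b)" if "Ul \<subseteq> phi b" for a b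
    proof -
      have "b = top" using that by (simp add: phi_top[symmetric] phi_subset_iff top_unique)
      then show ?thesis using \<open>u \<in> Ul\<close> assms(1) by (simp add: phi_top)
    qed
    then show "u \<in> sigma_imp imp U Ul"
      unfolding mem_sigma_imp using stone_open_Ul stone_closed_Ul \<open>U \<subseteq> Ul\<close> by blast
  qed
qed (rule sigma_imp_subset_Ul)

lemma sigma_imp_Int:
  assumes meet: "\<And>a b c. inf (imp a b) (imp a c) = imp a (inf b c)"
  shows "sigma_imp imp U V \<inter> sigma_imp imp U V' = sigma_imp imp U (V \<inter> V')"
proof
  show "sigma_imp imp U (V \<inter> V') \<subseteq> sigma_imp imp U V \<inter> sigma_imp imp U V'"
    using sigma_imp_mono[of U U] by blast
  show "sigma_imp imp U V \<inter> sigma_imp imp U V' \<subseteq> sigma_imp imp U (V \<inter> V')"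
  proof
    fix u assume "u \<in> sigma_imp imp U V \<inter> sigma_imp imp U V'"
    then obtain W Y W' Y' where "stone_open W" "U \<subseteq> W" "stone_closed Y" "Y \<subseteq> V"
      and "stone_open W'" "U \<subseteq> W'" "stone_closed Y'" "Y' \<subseteq> V'"
      and u_imp: "\<forall>a b. phi a \<subseteq> W \<longrightarrow> Y \<subseteq> phi b \<longrightarrow> u \<in> phi (imp a b)"
      and u_imp': "\<forall>a b. phi a \<subseteq> W' \<longrightarrow> Y' \<subseteq> phi b \<longrightarrow> u \<in> phi (imp a b)"
      unfolding Int_iff mem_sigma_imp by blast
    have "u \<in> phi (imp a b)" if a_below: "phi a \<subseteq> W \<inter> W'" and b_above: "Y \<inter> Y' \<subseteq> phi b" for a b
    proof -
      obtain c where "Y \<subseteq> phi (sup b c)" "Y' \<subseteq> phi (sup b (- c))"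
        using closed_Int_subset_phi_split[OF \<open>stone_closed Y\<close> \<open>stone_closed Y'\<close> b_above] .
      then have "u \<in> phi (inf (imp a (sup b c)) (imp a (sup b (- c))))"
        using u_imp u_imp' a_below by (simp add: phi_inf)
      also have "inf (imp a (sup b c)) (imp a (sup b (- c))) = imp a b"
        by (simp add: meet flip: sup_inf_distrib1)
      finally show ?thesis .
    qed
    moreover have "stone_open (W \<inter> W')" "stone_closed (Y \<inter> Y')"
      using stone_open_Int stone_closed_Int \<open>stone_open W\<close> \<open>stone_open W'\<close>
        \<open>stone_closed Y\<close> \<open>stone_closed Y'\<close> by blast+
    ultimately show "u \<in> sigma_imp imp U (V \<inter> V')"
      unfolding mem_sigma_imp using \<open>U \<subseteq> W\<close> \<open>U \<subseteq> W'\<close> \<open>Y \<subseteq> V\<close> \<open>Y' \<subseteq> V'\<close>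
      by (meson Int_mono le_inf_iff)
  qed
qed

theorem theorem2p15:
  fixes imp :: "'a::boolean_algebra \<Rightarrow> 'a \<Rightarrow> 'a"
  assumes "conditional_algebra imp"
  shows "conditional_algebra_pow (Ul :: 'a set set) (sigma_imp imp)"
proof -
  have top: "\<And>a. imp a top = top"
    and meet: "\<And>a b c. inf (imp a b) (imp a c) = imp a (inf b c)"
    using assms unfolding conditional_algebra_def by blast+
  show ?thesis
    unfolding conditional_algebra_pow_def
  proof (intro conjI allI impI)
    show "sigma_imp imp U V \<subseteq> Ul" for U V by (rule sigma_imp_subset_Ul)
    show "sigma_imp imp U Ul = Ul" if "U \<subseteq> Ul" for U using top that by (rule sigma_imp_Ul)
    show "sigma_imp imp U V \<inter> sigma_imp imp U W = sigma_imp imp U (V \<inter> W)" for U V W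
      using meet by (rule sigma_imp_Int)
    show "sigma_imp imp (U \<union> V) W \<subseteq> sigma_imp imp U W \<inter> sigma_imp imp V W" for U V W
      using sigma_imp_mono[of U "U \<union> V" W W] sigma_imp_mono[of V "U \<union> V" W W] by blast
  qed
qed

end
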